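(* Fix $\alpha\in(0,1/2]$ and positive integers $a,n$ with $n\ge \max\{1000(\log(a)+1)/\alpha,\ a+1\}$. Let $A,B$ be disjoint sets with $|A|=a$, $|B|=n$, and let $G$ be the random bipartite graph between $A$ and $B$ in which each of the $an$ pairs is an edge independently with probability $4\alpha/3$. Then with probability at least $1-1/e$ the following property holds: for every nonempty $U\subseteq B$, the number of vertices $y\in A$ with $|U\cap N(y)|>2\alpha|U|$ is at most $24n/(\alpha|U|)$.
   Context: $N(y)$ is the neighbourhood of $y$ in $G$; $\log$ is the natural logarithm. *)

theory Defs
  imports "HOL-Probability.Probability"
begin

definition random_bipartite :: "'a set \<Rightarrow> 'a set \<Rightarrow> real \<Rightarrow> ('a \<times> 'a \<Rightarrow> bool) pmf" where
  "random_bipartite A B p = Pi_pmf (A \<times> B) False (\<lambda>_. bernoulli_pmf p)"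

definition nbhd :: "'a set \<Rightarrow> ('a \<times> 'a \<Rightarrow> bool) \<Rightarrow> 'a \<Rightarrow> 'a set" where
  "nbhd B E y = {b \<in> B. E (y, b)}"

end

theory Submission
  imports Defs
begin

text \<open>Let G fail the property. Then some nonempty U \<subseteq> B has a set S \<subseteq> A of more than
  24n/(\<alpha>|U|) vertices y with |U \<inter> N(y)| > 2\<alpha>|U|. For a fixed pair (U,S), Markov's inequality
  applied to e^{e(S,U)/2}, where e(S,U) counts the edges between S and U, bounds the probability of
  this by e^{-\<alpha>|U||S|/8} < e^{-3n}. There are at most 2^n 2^a \<le> 4^n pairs (U,S), and
  4^n e^{-3n} \<le> e^{-n} \<le> 1/e.\<close>

lemma exp_half_le: "exp (1/2::real) \<le> 53/32"
proof -
  have "exp (1/2::real)^2 = exp 1" by (simp flip: exp_of_nat_mult)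
  also have "\<dots> < 272/100" by (rule e_less_272)
  also have "\<dots> \<le> (53/32)^2" by (simp add: power2_eq_square)
  finally show ?thesis by (rule power2_le_imp_le[OF less_imp_le]) simp
qed

lemma four_le_exp_two: "4 \<le> exp (2::real)"
proof -
  have "(4::real) \<le> 1 + 2 + 2^2/2" by simp
  also have "\<dots> \<le> exp 2" by (rule exp_lower_Taylor_quadratic) simp
  finally show ?thesis .
qed

lemma bernoulli_moment_exp_half_le:
  fixes \<alpha> :: real
  assumes "0 \<le> \<alpha>"
  shows "1 + 4 * \<alpha> / 3 * (exp (1/2) - 1) \<le> exp (7 * \<alpha> / 8)"
proof -
  have "4 * \<alpha> / 3 * (exp (1/2) - 1) \<le> 4 * \<alpha> / 3 * (21/32)"
    using exp_half_le assms by (intro mult_left_mono) auto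
  then have "4 * \<alpha> / 3 * (exp (1/2) - 1) \<le> 7 * \<alpha> / 8" by simp
  then show ?thesis using exp_ge_add_one_self[of "7 * \<alpha> / 8"] by linarith
qed

lemma expectation_random_bipartite_edge_weight:
  fixes p t :: real
  assumes "finite A" "finite B" "C \<subseteq> A \<times> B" "0 \<le> p" "p \<le> 1" "0 \<le> t"
  shows "measure_pmf.expectation (random_bipartite A B p)
           (\<lambda>E. \<Prod>e\<in>A \<times> B. if e \<in> C \<and> E e then t else 1) = (1 + p * (t - 1)) ^ card C"
proof -
  have "measure_pmf.expectation (random_bipartite A B p) (\<lambda>E. \<Prod>e\<in>A \<times> B. if e \<in> C \<and> E e then t else 1)
      = (\<Prod>e\<in>A \<times> B. measure_pmf.expectation (bernoulli_pmf p) (\<lambda>v. if e \<in> C \<and> v then t else 1))"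
    unfolding random_bipartite_def
    by (rule expectation_prod_Pi_pmf) (use assms in \<open>auto intro: integrable_measure_pmf_finite\<close>)
  also have "\<dots> = (\<Prod>e\<in>A \<times> B. if e \<in> C then 1 + p * (t - 1) else 1)"
    using assms by (intro prod.cong) (auto simp: algebra_simps)
  also have "\<dots> = (1 + p * (t - 1)) ^ card C"
    using assms by (subst prod.If_cases) (auto simp: Int_absorb1)
  finally show ?thesis .
qed

lemma edge_weight_eq_prod_degrees:
  assumes "finite A" "finite B" "S \<subseteq> A" "U \<subseteq> B"
  shows "(\<Prod>e\<in>A \<times> B. if e \<in> S \<times> U \<and> E e then t else 1) = (\<Prod>y\<in>S. t ^ card (U \<inter> nbhd B E y))"
proof -
  have "(\<Prod>e\<in>A \<times> B. if e \<in> S \<times> U \<and> E e then t else 1) = (\<Prod>e\<in>S \<times> U. if E e then t else 1)"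
    using assms by (intro prod.mono_neutral_cong_right) auto
  also have "\<dots> = (\<Prod>y\<in>S. \<Prod>b\<in>U. if E (y, b) then t else 1)"
    by (simp add: prod.cartesian_product)
  also have "\<dots> = (\<Prod>y\<in>S. t ^ card (U \<inter> nbhd B E y))"
  proof (intro prod.cong refl)
    fix y
    have "finite U" using assms finite_subset by blast
    then have "(\<Prod>b\<in>U. if E (y, b) then t else 1) = t ^ card (U \<inter> {b. E (y, b)})"
      by (subst prod.If_cases) auto
    also have "U \<inter> {b. E (y, b)} = U \<inter> nbhd B E y"
      using assms by (auto simp: nbhd_def)
    finally show "(\<Prod>b\<in>U. if E (y, b) then t else 1) = t ^ card (U \<inter> nbhd B E y)" .
  qed
  finally show ?thesis .
qed

lemma prob_all_dense_le:
  fixes \<alpha> :: real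
  assumes "0 < \<alpha>" "\<alpha> \<le> 3/4" "finite A" "finite B" "S \<subseteq> A" "U \<subseteq> B"
  shows "measure_pmf.prob (random_bipartite A B (4 * \<alpha> / 3))
           {E. \<forall>y\<in>S. real (card (U \<inter> nbhd B E y)) > 2 * \<alpha> * real (card U)}
         \<le> exp (- (\<alpha> * real (card U) * real (card S)) / 8)"
proof -
  define M where "M = random_bipartite A B (4 * \<alpha> / 3)"
  define t where "t = exp (1/2::real)"
  define g where "g = (\<lambda>E::'a \<times> 'a \<Rightarrow> bool. \<Prod>e\<in>A \<times> B. if e \<in> S \<times> U \<and> E e then t else 1)"
  define m where "m = real (card S) * real (card U)"
  have "S \<times> U \<subseteq> A \<times> B" using assms by auto
  moreover have "finite (S \<times> U)" using assms finite_subset by blast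
  moreover have "1 \<le> t" by (simp add: t_def)
  ultimately have Eg: "measure_pmf.expectation M g = (1 + 4 * \<alpha> / 3 * (t - 1)) ^ (card S * card U)"
    using assms unfolding M_def g_def
    by (subst expectation_random_bipartite_edge_weight) (auto simp: card_cartesian_product)
  from \<open>1 \<le> t\<close> have g_nonneg: "0 \<le> g E" for E unfolding g_def by (intro prod_nonneg) auto
  have g_integrable: "integrable M g"
    unfolding M_def random_bipartite_def g_def
    by (rule integrable_prod_Pi_pmf) (use assms in \<open>auto intro: integrable_measure_pmf_finite\<close>)
  have dense_imp_large: "exp (\<alpha> * m) \<le> g E"
    if dense: "\<forall>y\<in>S. real (card (U \<inter> nbhd B E y)) > 2 * \<alpha> * real (card U)" for E
  proof -
    have "exp (\<alpha> * m) = (\<Prod>y\<in>S. exp (2 * \<alpha> * real (card U) / 2))"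
      by (simp add: m_def flip: exp_of_nat_mult)
    also have "\<dots> \<le> (\<Prod>y\<in>S. exp (real (card (U \<inter> nbhd B E y)) / 2))"
      using dense by (intro prod_mono) auto
    also have "\<dots> = g E"
      unfolding g_def using assms
      by (simp add: edge_weight_eq_prod_degrees t_def flip: exp_of_nat_mult)
    finally show ?thesis .
  qed
  have "measure_pmf.prob M {E. \<forall>y\<in>S. real (card (U \<inter> nbhd B E y)) > 2 * \<alpha> * real (card U)}
        \<le> measure_pmf.prob M {E\<in>space M. g E \<ge> exp (\<alpha> * m)}"
    using dense_imp_large by (intro measure_pmf.finite_measure_mono) auto
  also have "\<dots> \<le> measure_pmf.expectation M g / exp (\<alpha> * m)"
    by (rule integral_Markov_inequality_measure[OF g_integrable]) (auto simp: g_nonneg)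
  also have "\<dots> \<le> exp (7 * \<alpha> / 8) ^ (card S * card U) / exp (\<alpha> * m)"
    unfolding Eg t_def using assms
    by (intro divide_right_mono power_mono bernoulli_moment_exp_half_le) (auto intro: add_nonneg_nonneg)
  also have "\<dots> = exp (- (\<alpha> * real (card U) * real (card S)) / 8)"
    by (simp add: m_def exp_diff [symmetric] algebra_simps flip: exp_of_nat_mult)
  finally show ?thesis by (simp add: M_def)
qed

lemma prob_all_dense_le_exp:
  fixes \<alpha> c :: real
  assumes "0 < \<alpha>" "\<alpha> \<le> 3/4" "finite A" "finite B" "S \<subseteq> A" "U \<subseteq> B" "U \<noteq> {}"
    and many: "24 * c / (\<alpha> * real (card U)) < real (card S)"
  shows "measure_pmf.prob (random_bipartite A B (4 * \<alpha> / 3))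
           {E. \<forall>y\<in>S. real (card (U \<inter> nbhd B E y)) > 2 * \<alpha> * real (card U)}
         \<le> exp (- 3 * c)"
proof -
  have "finite U" using assms finite_subset by blast
  with assms have "0 < \<alpha> * real (card U)" by (simp add: card_gt_0_iff)
  with many have "24 * c < real (card S) * (\<alpha> * real (card U))"
    by (simp add: pos_divide_less_eq)
  then have "- (\<alpha> * real (card U) * real (card S)) / 8 \<le> - 3 * c"
    by (simp add: algebra_simps)
  with prob_all_dense_le[OF assms(1-6)] show ?thesis
    by (meson exp_le_cancel_iff order_trans)
qed

lemma card_Pow_times_Pow_le:
  assumes "finite A" "finite B" "card A \<le> card B"
  shows "card (Pow B \<times> Pow A) \<le> 4 ^ card B"
proof -
  have "card (Pow B \<times> Pow A) = 2 ^ card B * 2 ^ card A"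
    using assms by (simp add: card_cartesian_product card_Pow)
  also have "\<dots> \<le> 2 ^ card B * 2 ^ card B"
    using assms by (intro mult_left_mono power_increasing) auto
  finally show ?thesis by (simp flip: power_mult_distrib)
qed

lemma prob_many_dense_vertices_le:
  fixes \<alpha> :: real
  assumes "0 < \<alpha>" "\<alpha> \<le> 3/4" "finite A" "finite B" "card A \<le> card B"
  shows "measure_pmf.prob (random_bipartite A B (4 * \<alpha> / 3))
           {E. \<exists>U. U \<subseteq> B \<and> U \<noteq> {} \<and> 24 * real (card B) / (\<alpha> * real (card U)) <
               real (card {y \<in> A. real (card (U \<inter> nbhd B E y)) > 2 * \<alpha> * real (card U)})}
         \<le> 4 ^ card B * exp (- 3 * real (card B))"
  (is "measure_pmf.prob ?M ?Bad \<le> _")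
proof -
  define I where "I = {(U, S). U \<subseteq> B \<and> U \<noteq> {} \<and> S \<subseteq> A \<and>
                               24 * real (card B) / (\<alpha> * real (card U)) < real (card S)}"
  define Ev where "Ev = (\<lambda>(U, S). {E. \<forall>y\<in>S. real (card (U \<inter> nbhd B E y)) > 2 * \<alpha> * real (card U)})"
  have I_sub: "I \<subseteq> Pow B \<times> Pow A" by (auto simp: I_def)
  then have "finite I" using assms finite_subset by blast
  have "card I \<le> 4 ^ card B"
    using card_mono[OF _ I_sub] card_Pow_times_Pow_le[OF assms(3-5)] assms by simp
  then have card_I: "real (card I) \<le> 4 ^ card B" by (metis of_nat_le_iff of_nat_numeral of_nat_power)
  have Ev_le: "measure_pmf.prob ?M (Ev i) \<le> exp (- 3 * real (card B))" if "i \<in> I" for i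
    using that prob_all_dense_le_exp[OF assms(1-4)] by (auto simp: I_def Ev_def)
  have "?Bad \<subseteq> (\<Union>i\<in>I. Ev i)"
  proof
    fix E assume "E \<in> ?Bad"
    then obtain U where "U \<subseteq> B" "U \<noteq> {}" and "24 * real (card B) / (\<alpha> * real (card U)) <
               real (card {y \<in> A. real (card (U \<inter> nbhd B E y)) > 2 * \<alpha> * real (card U)})"
      by blast
    then have "(U, {y \<in> A. real (card (U \<inter> nbhd B E y)) > 2 * \<alpha> * real (card U)}) \<in> I"
      and "E \<in> Ev (U, {y \<in> A. real (card (U \<inter> nbhd B E y)) > 2 * \<alpha> * real (card U)})"
      by (auto simp: I_def Ev_def)
    then show "E \<in> (\<Union>i\<in>I. Ev i)" by blast
  qed
  then have "measure_pmf.prob ?M ?Bad \<le> measure_pmf.prob ?M (\<Union>i\<in>I. Ev i)"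
    by (intro measure_pmf.finite_measure_mono) simp_all
  also have "\<dots> \<le> (\<Sum>i\<in>I. measure_pmf.prob ?M (Ev i))"
    by (rule measure_pmf.finite_measure_subadditive_finite[OF \<open>finite I\<close>]) simp
  also have "\<dots> \<le> real (card I) * exp (- 3 * real (card B))"
    using sum_mono[OF Ev_le] by simp
  also have "\<dots> \<le> 4 ^ card B * exp (- 3 * real (card B))"
    using card_I by (intro mult_right_mono) auto
  finally show ?thesis .
qed

theorem mainTheorem9:
  fixes \<alpha> :: real and a n :: nat and A B :: "'a set"
  assumes "0 < \<alpha>" "\<alpha> \<le> 1/2"
    and "0 < a" "0 < n"
    and "real n \<ge> 1000 * (ln (real a) + 1) / \<alpha>" "n \<ge> a + 1"
    and "finite A" "finite B" "A \<inter> B = {}" "card A = a" "card B = n"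
  shows "measure_pmf.prob (random_bipartite A B (4 * \<alpha> / 3))
           {E. \<forall>U. U \<subseteq> B \<and> U \<noteq> {} \<longrightarrow>
               real (card {y \<in> A. real (card (U \<inter> nbhd B E y)) > 2 * \<alpha> * real (card U)})
                 \<le> 24 * real n / (\<alpha> * real (card U))}
         \<ge> 1 - 1 / exp 1"
  (is "measure_pmf.prob ?M ?Good \<ge> _")
proof -
  have "UNIV - ?Good = {E. \<exists>U. U \<subseteq> B \<and> U \<noteq> {} \<and> 24 * real n / (\<alpha> * real (card U)) <
               real (card {y \<in> A. real (card (U \<inter> nbhd B E y)) > 2 * \<alpha> * real (card U)})}"
    by (simp add: set_diff_eq not_le conj_assoc)
  then have "measure_pmf.prob ?M (UNIV - ?Good) \<le> 4 ^ n * exp (- 3 * real n)"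
    using prob_many_dense_vertices_le[of \<alpha> A B] assms(1,2,6-8,10,11) by simp
  also have "\<dots> \<le> exp 2 ^ n * exp (- 3 * real n)"
    using four_le_exp_two by (intro mult_right_mono power_mono) auto
  also have "\<dots> \<le> exp (- 1)"
    using assms(4) by (simp flip: exp_of_nat_mult exp_add)
  finally have "1 - exp (- 1) \<le> measure_pmf.prob ?M ?Good"
    using measure_pmf.prob_compl[of ?Good ?M] by simp
  then show ?thesis by (simp only: exp_minus inverse_eq_divide)
qed

end
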